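(* Let $\mathbb{F}$ be a field, $0\neq h\in\mathbb{F}[x]$, $A=A_h$ the unital $\mathbb{F}$-algebra generated by $x,\hat y$ with $\hat yx-x\hat y=h$, and let $D$ be an $\mathbb{F}$-linear derivation of $A$. Then for all $a\in A$ and $k\geq0$: (a) $D(h)\in hA$ and $D(x)\in\pi_hA$; (b) $D(a^k)-ka^{k-1}D(a)\in hA$; (c) $D(\gcd(h,h'))\in\gcd(h,h')A$.
   Context: $\pi_h\in\mathbb{F}[x]$ is the monic polynomial equal, up to a nonzero scalar, to $h/\gcd(h,h')$. Every product of factors of $h$ is a normal element of $A$, so $hA=Ah$, $\pi_hA$ and $\gcd(h,h')A$ are two-sided ideals. *)

theory Defs
  imports "HOL-Computational_Algebra.Computational_Algebra"
begin

text \<open>Concrete model of the algebra A_h = F<x, y> / (y x - x y = h): the Ore extension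
  F[x][y; delta] with delta(f) = h * f'. An element is represented by its unique
  normal form  sum_j f_j(x) y^j, i.e. as a polynomial in y (outer poly) whose
  coefficients f_j are polynomials in x (inner poly).\<close>

definition weyl_delta :: "'a::field poly \<Rightarrow> 'a poly \<Rightarrow> 'a poly" where
  "weyl_delta h f = h * pderiv f"

text \<open>y^j * g = sum_k (j choose k) delta^k(g) y^(j-k)\<close>
definition weyl_ypow_mult :: "'a::field poly \<Rightarrow> nat \<Rightarrow> 'a poly \<Rightarrow> 'a poly poly" where
  "weyl_ypow_mult h j g =
     (\<Sum>k\<le>j. monom (smult (of_nat (j choose k)) ((weyl_delta h ^^ k) g)) (j - k))"

text \<open>Multiplication of A_h: (f y^j) * (g y^l) = f (y^j g) y^l.\<close>
definition weyl_mult :: "'a::field poly \<Rightarrow> 'a poly poly \<Rightarrow> 'a poly poly \<Rightarrow> 'a poly poly" where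
  "weyl_mult h p q =
     (\<Sum>j\<le>degree p. \<Sum>l\<le>degree q.
        smult (coeff p j) (weyl_ypow_mult h j (coeff q l)) * monom 1 l)"

definition weyl_pow :: "'a::field poly \<Rightarrow> 'a poly poly \<Rightarrow> nat \<Rightarrow> 'a poly poly" where
  "weyl_pow h a k = (weyl_mult h a ^^ k) 1"

definition weyl_x :: "'a::field poly poly" where
  "weyl_x = [:[:0, 1:]:]"

definition weyl_emb :: "'a::field poly \<Rightarrow> 'a poly poly" where
  "weyl_emb f = [:f:]"

text \<open>The right ideal f A (two-sided when f is a product of factors of h).\<close>
definition weyl_ideal :: "'a::field poly \<Rightarrow> 'a poly \<Rightarrow> 'a poly poly set" where
  "weyl_ideal h f = {weyl_mult h (weyl_emb f) b | b. True}"

definition weyl_derivation :: "'a::field poly \<Rightarrow> ('a poly poly \<Rightarrow> 'a poly poly) \<Rightarrow> bool" where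
  "weyl_derivation h D \<longleftrightarrow>
     (\<forall>p q. D (p + q) = D p + D q) \<and>
     (\<forall>c p. D (smult [:c:] p) = smult [:c:] (D p)) \<and>
     (\<forall>p q. D (weyl_mult h p q) = weyl_mult h (D p) q + weyl_mult h p (D q))"

definition pi_poly :: "'a::field_gcd poly \<Rightarrow> 'a poly" where
  "pi_poly h = normalize (h div gcd h (pderiv h))"

end

theory Submission
  imports Defs
begin

text \<open>Modulo the ideal hA the product of A_h agrees with the commutative product of F[x][y],
  because moving y^j past g(x) only produces terms \<delta>^k(g) with k \<ge> 1, all divisible by h.
  Hence commutators lie in hA, so D(h) = D[y, x] \<in> hA, and D obeys the power rule and the chain
  rule D(f) \<equiv> f' D(x) modulo hA. For f = h the chain rule gives h | h' D(x) coefficientwise,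
  and cancelling gcd(h, h') leaves \<pi>_h | D(x). Finally gcd(h, h') divides gcd(h, h')' \<pi>_h,
  which with the chain rule gives the last claim.\<close>

lemma weyl_mult_emb_left: "weyl_mult h (weyl_emb f) b = smult f b"
proof -
  have ypow_0: "weyl_ypow_mult h 0 g = [:g:]" for g
    unfolding weyl_ypow_mult_def by (simp add: monom_0)
  have "weyl_mult h (weyl_emb f) b =
      (\<Sum>l\<le>degree b. smult f (weyl_ypow_mult h 0 (coeff b l)) * monom 1 l)"
    unfolding weyl_mult_def weyl_emb_def by simp
  also have "\<dots> = (\<Sum>l\<le>degree b. monom (f * coeff b l) l)"
    by (simp add: ypow_0 smult_monom mult_monom flip: monom_0)
  also have "\<dots> = [:f:] * (\<Sum>l\<le>degree b. monom (coeff b l) l)"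
    by (simp add: sum_distrib_left smult_monom)
  also have "\<dots> = smult f b" by (simp add: poly_as_sum_of_monoms)
  finally show ?thesis .
qed

text \<open>Left multiplication by weyl_emb f is smult f, so membership in fA is divisibility by the constant
  [:f:] in the commutative ring of normal forms; all ideal bookkeeping below is done with dvd.\<close>

lemma mem_weyl_ideal_iff: "p \<in> weyl_ideal h f \<longleftrightarrow> [:f:] dvd p"
  unfolding weyl_ideal_def weyl_mult_emb_left dvd_def by auto

lemma dvd_weyl_delta_funpow: "0 < k \<Longrightarrow> h dvd (weyl_delta h ^^ k) g"
  by (cases k) (simp_all add: weyl_delta_def)

lemma const_poly_dvd_monom_iff:
  fixes c a :: "'a::idom"
  shows "[:c:] dvd monom a n \<longleftrightarrow> c dvd a"
  unfolding const_poly_dvd_iff by (metis coeff_monom dvd_0_right)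

lemma weyl_ypow_mult_congruent: "[:h:] dvd weyl_ypow_mult h j g - monom g j"
proof -
  let ?t = "\<lambda>k. monom (smult (of_nat (j choose k)) ((weyl_delta h ^^ k) g)) (j - k)"
  have "weyl_ypow_mult h j g - monom g j = (\<Sum>k\<in>{..j} - {0}. ?t k)"
    unfolding weyl_ypow_mult_def by (simp add: sum.remove[of "{..j}" 0])
  also have "[:h:] dvd \<dots>"
    by (intro dvd_sum) (simp add: const_poly_dvd_monom_iff dvd_smult dvd_weyl_delta_funpow)
  finally show ?thesis .
qed

lemma poly_mult_eq_double_sum:
  fixes p q :: "'a::comm_semiring_1 poly"
  shows "p * q = (\<Sum>j\<le>degree p. \<Sum>l\<le>degree q. smult (coeff p j) (monom (coeff q l) j) * monom 1 l)"
proof -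
  have "p * q = (\<Sum>j\<le>degree p. monom (coeff p j) j) * (\<Sum>l\<le>degree q. monom (coeff q l) l)"
    by (simp add: poly_as_sum_of_monoms)
  also have "\<dots> = (\<Sum>j\<le>degree p. \<Sum>l\<le>degree q. monom (coeff p j) j * monom (coeff q l) l)"
    by (simp add: sum_product)
  also have "\<dots> = (\<Sum>j\<le>degree p. \<Sum>l\<le>degree q. smult (coeff p j) (monom (coeff q l) j) * monom 1 l)"
    by (simp add: smult_monom mult_monom)
  finally show ?thesis .
qed

lemma weyl_mult_congruent: "[:h:] dvd weyl_mult h p q - p * q"
proof -
  have "weyl_mult h p q - p * q = (\<Sum>j\<le>degree p. \<Sum>l\<le>degree q.
      smult (coeff p j) (weyl_ypow_mult h j (coeff q l) - monom (coeff q l) j) * monom 1 l)"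
    unfolding weyl_mult_def poly_mult_eq_double_sum[of p q]
    by (simp add: sum_subtractf smult_diff_right left_diff_distrib)
  also have "[:h:] dvd \<dots>"
    by (intro dvd_sum dvd_mult2 dvd_smult weyl_ypow_mult_congruent)
  finally show ?thesis .
qed

lemma weyl_commutator_congruent: "[:h:] dvd weyl_mult h a b - weyl_mult h b a"
proof -
  have "weyl_mult h a b - weyl_mult h b a = (weyl_mult h a b - a * b) - (weyl_mult h b a - b * a)"
    by (simp add: mult.commute)
  then show ?thesis by (metis dvd_diff weyl_mult_congruent)
qed

definition weyl_y :: "'a::field poly poly" where
  "weyl_y = [:0, 1:]"

lemma weyl_x_eq_emb: "weyl_x = weyl_emb [:0, 1:]"
  by (simp add: weyl_x_def weyl_emb_def)

lemma weyl_commutator_y_x: "weyl_mult h weyl_y weyl_x - weyl_mult h weyl_x weyl_y = weyl_emb h"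
proof -
  have "weyl_mult h weyl_x weyl_y = monom [:0, 1:] 1"
    by (simp add: weyl_x_eq_emb weyl_mult_emb_left weyl_y_def monom_Suc monom_0)
  moreover have "weyl_mult h weyl_y weyl_x = monom [:0, 1:] 1 + [:h:]"
    unfolding weyl_mult_def weyl_x_def weyl_y_def weyl_ypow_mult_def weyl_delta_def
    by (simp add: monom_Suc monom_0 pderiv_pCons)
  ultimately show ?thesis by (simp add: weyl_emb_def)
qed

lemma weyl_derivation_add: "weyl_derivation h D \<Longrightarrow> D (p + q) = D p + D q"
  unfolding weyl_derivation_def by blast

lemma weyl_derivation_smult: "weyl_derivation h D \<Longrightarrow> D (smult [:c:] p) = smult [:c:] (D p)"
  unfolding weyl_derivation_def by blast

lemma weyl_derivation_mult:
  "weyl_derivation h D \<Longrightarrow> D (weyl_mult h p q) = weyl_mult h (D p) q + weyl_mult h p (D q)"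
  unfolding weyl_derivation_def by blast

lemma weyl_derivation_diff: "weyl_derivation h D \<Longrightarrow> D (p - q) = D p - D q"
  using weyl_derivation_add[of h D "p - q" q] by (simp add: algebra_simps)

lemma weyl_derivation_zero: "weyl_derivation h D \<Longrightarrow> D 0 = 0"
  using weyl_derivation_diff[of h D 0 0] by simp

lemma weyl_mult_one_left: "weyl_mult h 1 q = q"
  using weyl_mult_emb_left[of h 1 q] by (simp add: weyl_emb_def flip: one_pCons)

lemma weyl_derivation_one_congruent:
  assumes "weyl_derivation h D"
  shows "[:h:] dvd D 1"
proof -
  have "D 1 = weyl_mult h (D 1) 1 + D 1"
    using weyl_derivation_mult[OF assms, of 1 1] by (simp add: weyl_mult_one_left)
  then have "D 1 = - (weyl_mult h (D 1) 1 - D 1 * 1)"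
    by simp
  then show ?thesis
    by (metis dvd_minus_iff weyl_mult_congruent)
qed

lemma weyl_emb_pCons: "weyl_emb (pCons c f) = smult [:c:] 1 + weyl_mult h weyl_x (weyl_emb f)"
  unfolding weyl_x_eq_emb weyl_mult_emb_left by (simp add: weyl_emb_def)

lemma weyl_derivation_emb_congruent:
  assumes D: "weyl_derivation h D"
  shows "[:h:] dvd D (weyl_emb f) - smult (pderiv f) (D weyl_x)"
proof (induction f)
  case 0
  then show ?case by (simp add: weyl_emb_def weyl_derivation_zero[OF D])
next
  case (pCons c f)
  let ?Dx = "D weyl_x" and ?Df = "D (weyl_emb f)"
  have "D (weyl_emb (pCons c f)) =
      smult [:c:] (D 1) + weyl_mult h ?Dx (weyl_emb f) + smult [:0, 1:] ?Df"
    unfolding weyl_emb_pCons[of c f h] weyl_derivation_add[OF D] weyl_derivation_smult[OF D]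
      weyl_derivation_mult[OF D]
    by (simp add: weyl_x_eq_emb weyl_mult_emb_left)
  then have "D (weyl_emb (pCons c f)) - smult (pderiv (pCons c f)) ?Dx =
      smult [:c:] (D 1) + (weyl_mult h ?Dx (weyl_emb f) - ?Dx * weyl_emb f)
      + smult [:0, 1:] (?Df - smult (pderiv f) ?Dx)"
    by (simp add: pderiv_pCons weyl_emb_def algebra_simps smult_add_left smult_diff_right)
  then show ?case
    by (simp add: dvd_add dvd_smult pCons weyl_mult_congruent weyl_derivation_one_congruent[OF D])
qed

lemma weyl_pow_0 [simp]: "weyl_pow h a 0 = 1"
  by (simp add: weyl_pow_def)

lemma weyl_pow_Suc: "weyl_pow h a (Suc k) = weyl_mult h a (weyl_pow h a k)"
  by (simp add: weyl_pow_def)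

lemma weyl_pow_congruent: "[:h:] dvd weyl_pow h a k - a ^ k"
proof (induction k)
  case 0
  then show ?case by simp
next
  case (Suc k)
  have "weyl_pow h a (Suc k) - a ^ Suc k =
     (weyl_mult h a (weyl_pow h a k) - a * weyl_pow h a k) + a * (weyl_pow h a k - a ^ k)"
    by (simp add: weyl_pow_Suc algebra_simps)
  then show ?case
    by (simp add: Suc dvd_add weyl_mult_congruent)
qed

lemma weyl_derivation_pow_congruent_power:
  assumes D: "weyl_derivation h D"
  shows "[:h:] dvd D (weyl_pow h a k) - smult (of_nat k) (a ^ (k - 1) * D a)"
proof (induction k)
  case 0
  then show ?case by (simp add: weyl_derivation_one_congruent[OF D])
next
  case (Suc k)
  let ?w = "weyl_pow h a k"
  \<comment> \<open>needed because k - 1 is truncated at k = 0\<close>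
  have pow_shift: "smult (of_nat k) (a * (a ^ (k - 1) * D a)) = smult (of_nat k) (a ^ k * D a)"
    by (cases k) (simp_all add: mult.assoc)
  have "D (weyl_pow h a (Suc k)) - smult (of_nat (Suc k)) (a ^ (Suc k - 1) * D a) =
     (weyl_mult h (D a) ?w - D a * ?w) + D a * (?w - a ^ k)
     + (weyl_mult h a (D ?w) - a * D ?w)
     + a * (D ?w - smult (of_nat k) (a ^ (k - 1) * D a))
     + (smult (of_nat k) (a * (a ^ (k - 1) * D a)) - smult (of_nat k) (a ^ k * D a))"
    unfolding weyl_pow_Suc weyl_derivation_mult[OF D]
    by (simp add: algebra_simps smult_add_left of_nat_Suc)
  also have "[:h:] dvd \<dots>"
    unfolding pow_shift
    by (intro dvd_add dvd_mult Suc weyl_mult_congruent weyl_pow_congruent) simp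
  finally show ?case .
qed

lemma weyl_derivation_pow_congruent:
  assumes D: "weyl_derivation h D"
  shows "[:h:] dvd D (weyl_pow h a k) - smult (of_nat k) (weyl_mult h (weyl_pow h a (k - 1)) (D a))"
proof -
  let ?w = "weyl_pow h a (k - 1)"
  have "D (weyl_pow h a k) - smult (of_nat k) (weyl_mult h ?w (D a)) =
    (D (weyl_pow h a k) - smult (of_nat k) (a ^ (k - 1) * D a))
    - smult (of_nat k) ((weyl_mult h ?w (D a) - ?w * D a) + (?w - a ^ (k - 1)) * D a)"
    by (simp add: algebra_simps smult_add_right smult_diff_right)
  also have "[:h:] dvd \<dots>"
    by (intro dvd_diff dvd_add dvd_smult dvd_mult2 weyl_derivation_pow_congruent_power[OF D]
        weyl_mult_congruent weyl_pow_congruent)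
  finally show ?thesis .
qed

lemma pi_poly_dvd:
  fixes h c :: "'a::field_gcd poly"
  assumes "h \<noteq> 0" and "h dvd pderiv h * c"
  shows "pi_poly h dvd c"
proof -
  let ?g = "gcd h (pderiv h)"
  define h1 where "h1 = h div ?g"
  define h2 where "h2 = pderiv h div ?g"
  have g: "?g \<noteq> 0" using assms(1) by simp
  have "h1 * ?g dvd h2 * c * ?g"
    using assms(2) by (simp add: h1_def h2_def ac_simps)
  then have "h1 dvd h2 * c"
    using g by simp
  moreover have "coprime h1 h2"
    unfolding h1_def h2_def using assms(1) by (intro div_gcd_coprime) simp
  ultimately have "h1 dvd c"
    by (simp add: coprime_dvd_mult_right_iff)
  then show ?thesis
    by (simp add: pi_poly_def h1_def)
qed

lemma gcd_pderiv_dvd_pderiv_mult_pi_poly: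
  fixes h :: "'a::field_gcd poly"
  shows "gcd h (pderiv h) dvd pderiv (gcd h (pderiv h)) * pi_poly h"
proof -
  let ?g = "gcd h (pderiv h)"
  define h1 where "h1 = h div ?g"
  have "pderiv h = h1 * pderiv ?g + ?g * pderiv h1"
    by (metis h1_def dvd_div_mult_self gcd_dvd1 pderiv_mult)
  then have "?g dvd h1 * pderiv ?g"
    by (metis dvd_add_right_iff dvd_triv_left gcd_dvd2 add.commute)
  also have "h1 * pderiv ?g dvd pderiv ?g * pi_poly h"
    by (simp add: pi_poly_def h1_def mult.commute)
  finally show ?thesis .
qed

lemma weyl_derivation_emb_self:
  assumes D: "weyl_derivation h D"
  shows "[:h:] dvd D (weyl_emb h)"
proof -
  have "D (weyl_emb h) = (weyl_mult h (D weyl_y) weyl_x - weyl_mult h weyl_x (D weyl_y))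
      + (weyl_mult h weyl_y (D weyl_x) - weyl_mult h (D weyl_x) weyl_y)"
    unfolding weyl_commutator_y_x[symmetric] weyl_derivation_diff[OF D] weyl_derivation_mult[OF D]
    by (simp add: algebra_simps)
  then show ?thesis
    by (simp add: weyl_commutator_congruent)
qed

lemma weyl_derivation_x:
  fixes h :: "'a::field_gcd poly"
  assumes "h \<noteq> 0" and D: "weyl_derivation h D"
  shows "[:pi_poly h:] dvd D weyl_x"
proof -
  have "[:h:] dvd smult (pderiv h) (D weyl_x)"
    using dvd_diff[OF weyl_derivation_emb_self[OF D] weyl_derivation_emb_congruent[OF D, of h]]
    by simp
  then have "h dvd pderiv h * coeff (D weyl_x) n" for n
    by (simp add: const_poly_dvd_iff)
  then show ?thesis
    by (simp add: const_poly_dvd_iff pi_poly_dvd[OF assms(1)])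
qed

lemma weyl_derivation_emb_gcd_pderiv:
  fixes h :: "'a::field_gcd poly"
  assumes "h \<noteq> 0" and D: "weyl_derivation h D"
  shows "[:gcd h (pderiv h):] dvd D (weyl_emb (gcd h (pderiv h)))"
proof -
  let ?g = "gcd h (pderiv h)"
  obtain c where c: "D weyl_x = [:pi_poly h:] * c"
    using weyl_derivation_x[OF assms] by (elim dvdE)
  have "smult (pderiv ?g) (D weyl_x) = [:pderiv ?g * pi_poly h:] * c"
    by (simp add: c)
  then have "[:?g:] dvd smult (pderiv ?g) (D weyl_x)"
    using gcd_pderiv_dvd_pderiv_mult_pi_poly[of h] by (simp only:) (intro dvd_mult2, simp)
  moreover have "[:?g:] dvd D (weyl_emb ?g) - smult (pderiv ?g) (D weyl_x)"
    using weyl_derivation_emb_congruent[OF D] by (rule dvd_trans[rotated]) simp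
  ultimately show ?thesis
    by (metis diff_add_cancel dvd_add)
qed

theorem lemma5p5:
  fixes h :: "'a::field_gcd poly"
    and D :: "'a poly poly \<Rightarrow> 'a poly poly"
  assumes "h \<noteq> 0"
    and "weyl_derivation h D"
  shows "D (weyl_emb h) \<in> weyl_ideal h h
       \<and> D weyl_x \<in> weyl_ideal h (pi_poly h)
       \<and> (\<forall>a k. D (weyl_pow h a k)
               - smult (of_nat k) (weyl_mult h (weyl_pow h a (k - 1)) (D a))
             \<in> weyl_ideal h h)
       \<and> D (weyl_emb (gcd h (pderiv h))) \<in> weyl_ideal h (gcd h (pderiv h))"
  unfolding mem_weyl_ideal_iff
  using weyl_derivation_emb_self weyl_derivation_x weyl_derivation_pow_congruent
    weyl_derivation_emb_gcd_pderiv assms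
  by blast

end
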